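(* Let $X_N\in\mathbb{R}^{N\times M}$ (rows $x_n^\top$), $Y_N\in\mathbb{R}^N$, test vector $x\in\mathbb{R}^M$, $\lambda>0$, $\sigma>0$, and luckiness $w(\theta)=\exp\{-\frac{\lambda}{2\sigma^2}\|\theta\|^2\}$. Let $P_\lambda=(X_N^\top X_N+\lambda I)^{-1}$, $K_\lambda=1+x^\top P_\lambda x$, $\hat\theta_\lambda=P_\lambda X_N^\top Y_N$, and for $y\in\mathbb{R}$ let $\hat\theta_y=\arg\min_\theta\big[\sum_{n=1}^N(y_n-\theta^\top x_n)^2+(y-\theta^\top x)^2+\lambda\|\theta\|^2\big]$. Define $$\hat\mu=\frac{\lambda K_\lambda\,\hat\theta_\lambda^\top P_\lambda x}{1+\lambda x^\top P_\lambda^2x},\quad \hat\sigma^2=\frac{\sigma^2K_\lambda^2}{1+\lambda x^\top P_\lambda^2x},\quad c=\exp\Big\{\frac{1}{2\sigma^2}\Big[\frac{(\lambda\hat\theta_\lambda^\top P_\lambda x)^2}{1+\lambda x^\top P_\lambda^2x}-\lambda\|\hat\theta_\lambda\|^2\Big]\Big\}.$$ Then for all $y\in\mathbb{R}$, $$p_{\hat\theta_y}(y\mid x)\,w(\hat\theta_y)=\frac{c}{\sqrt{2\pi\sigma^2}}\exp\Big\{-\frac{1}{2\hat\sigma^2}\big(y-\hat\theta_\lambda^\top x+\hat\mu\big)^2\Big\}.$$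
   Context: $p_\theta(y\mid x)=\frac{1}{\sqrt{2\pi\sigma^2}}\exp\{-\frac{1}{2\sigma^2}(y-\theta^\top x)^2\}$. *)

theory Defs
  imports "HOL-Analysis.Analysis"
begin

definition gauss_dens :: "real \<Rightarrow> real ^ 'm \<Rightarrow> real \<Rightarrow> real ^ 'm \<Rightarrow> real" where
  "gauss_dens \<sigma> \<theta> y x = 1 / sqrt (2 * pi * \<sigma>\<^sup>2) * exp (- (1 / (2 * \<sigma>\<^sup>2)) * (y - \<theta> \<bullet> x)\<^sup>2)"

definition luck :: "real \<Rightarrow> real \<Rightarrow> real ^ 'm \<Rightarrow> real" where
  "luck lam \<sigma> \<theta> = exp (- (lam / (2 * \<sigma>\<^sup>2)) * (norm \<theta>)\<^sup>2)"

definition ridge_obj :: "real ^ 'm ^ 'n \<Rightarrow> real ^ 'n \<Rightarrow> real ^ 'm \<Rightarrow> real \<Rightarrow> real \<Rightarrow> real ^ 'm \<Rightarrow> real" where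
  "ridge_obj X Y x y lam \<theta> =
     (\<Sum>n\<in>UNIV. (Y $ n - \<theta> \<bullet> (X $ n))\<^sup>2) + (y - \<theta> \<bullet> x)\<^sup>2 + lam * (norm \<theta>)\<^sup>2"

definition theta_y :: "real ^ 'm ^ 'n \<Rightarrow> real ^ 'n \<Rightarrow> real ^ 'm \<Rightarrow> real \<Rightarrow> real \<Rightarrow> real ^ 'm" where
  "theta_y X Y x y lam = arg_min (ridge_obj X Y x y lam) (\<lambda>_. True)"

end

theory Submission
  imports Defs
begin

text \<open>The ridge objective with the test pair is an exact quadratic with Hessian
  \<open>G + x x\<^sup>T\<close>, where \<open>G = X\<^sup>T X + \<lambda> I\<close>; its minimiser solves \<open>(G + x x\<^sup>T) \<theta> = X\<^sup>T Y + y x\<close>,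
  and the Sherman--Morrison formula gives \<open>\<theta>\<^sub>y = \<theta>\<^sub>\<lambda> + (r / K) P x\<close> with residual
  \<open>r = y - \<theta>\<^sub>\<lambda>\<^sup>T x\<close>, so that \<open>y - \<theta>\<^sub>y\<^sup>T x = r / K\<close>.  Substituting into
  \<open>(y - \<theta>\<^sub>y\<^sup>T x)\<^sup>2 + \<lambda> \<parallel>\<theta>\<^sub>y\<parallel>\<^sup>2\<close> gives a quadratic in \<open>r\<close>, and completing the square in it
  yields the Gaussian in \<open>y\<close> of the theorem.\<close>

definition ridge_matrix :: "real ^ 'm ^ 'n \<Rightarrow> real \<Rightarrow> real ^ 'm ^ 'm" where
  "ridge_matrix X lam = transpose X ** X + lam *\<^sub>R mat 1"

lemma inner_transpose_matrix_vector:
  fixes A :: "real ^ 'm ^ 'n"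
  shows "u \<bullet> (transpose A *v v) = (A *v u) \<bullet> v"
  by (metis dot_lmul_matrix inner_commute transpose_matrix_vector)

lemma ridge_matrix_vector:
  "ridge_matrix X lam *v d = transpose X *v (X *v d) + lam *\<^sub>R d"
  unfolding ridge_matrix_def
  by (simp add: matrix_vector_mult_add_rdistrib matrix_vector_mul_assoc
      flip: scaleR_matrix_vector_assoc del: transpose_matrix_vector)

lemma inner_ridge_matrix:
  "u \<bullet> (ridge_matrix X lam *v v) = (X *v u) \<bullet> (X *v v) + lam * (u \<bullet> v)"
  by (simp add: ridge_matrix_vector inner_add_right inner_transpose_matrix_vector
      del: transpose_matrix_vector)

lemma ridge_matrix_self_adjoint:
  "u \<bullet> (ridge_matrix X lam *v v) = (ridge_matrix X lam *v u) \<bullet> v"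
  by (metis inner_ridge_matrix inner_commute)

lemma invertible_ridge_matrix:
  assumes "lam > 0"
  shows "invertible (ridge_matrix X lam)"
proof -
  have "d = 0" if "ridge_matrix X lam *v d = 0" for d
  proof -
    have "(norm (X *v d))\<^sup>2 + lam * (norm d)\<^sup>2 = 0"
      using inner_ridge_matrix[of d X lam d] that by (simp add: dot_square_norm)
    with assms show ?thesis
      by (smt (verit) mult_pos_pos norm_eq_zero zero_le_power2 zero_less_power2)
  qed
  then show ?thesis
    using invertible_left_inverse matrix_left_invertible_ker by blast
qed

lemma matrix_vector_mul_matrix_inv:
  fixes A :: "'a::field ^ 'n ^ 'n"
  assumes "invertible A"
  shows "A *v (matrix_inv A *v v) = v"
proof -
  have "A ** matrix_inv A = mat 1 \<and> matrix_inv A ** A = mat 1"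
    using assms unfolding matrix_inv_def invertible_def by (rule someI_ex)
  then show ?thesis
    by (metis matrix_vector_mul_assoc matrix_vector_mul_lid)
qed

lemma matrix_inv_self_adjoint:
  fixes A :: "real ^ 'n ^ 'n"
  assumes "invertible A" and "\<And>u v. u \<bullet> (A *v v) = (A *v u) \<bullet> v"
  shows "u \<bullet> (matrix_inv A *v v) = (matrix_inv A *v u) \<bullet> v"
  by (metis assms matrix_vector_mul_matrix_inv)

lemma inner_matrix_inv_ridge_matrix_nonneg:
  assumes "lam > 0"
  shows "0 \<le> x \<bullet> (matrix_inv (ridge_matrix X lam) *v x)"
proof -
  let ?v = "matrix_inv (ridge_matrix X lam) *v x"
  have "x \<bullet> ?v = ?v \<bullet> (ridge_matrix X lam *v ?v)"
    by (simp add: matrix_vector_mul_matrix_inv invertible_ridge_matrix[OF assms] inner_commute)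
  also have "\<dots> \<ge> 0"
    using assms by (simp add: inner_ridge_matrix)
  finally show ?thesis .
qed

lemma ridge_obj_eq:
  "ridge_obj X Y x y lam \<theta> = (norm (Y - X *v \<theta>))\<^sup>2 + (y - x \<bullet> \<theta>)\<^sup>2 + lam * (norm \<theta>)\<^sup>2"
proof -
  have "(\<Sum>n\<in>UNIV. (Y $ n - \<theta> \<bullet> (X $ n))\<^sup>2) = (Y - X *v \<theta>) \<bullet> (Y - X *v \<theta>)"
    by (simp add: inner_vec_def matrix_vector_mult_def power2_eq_square mult.commute)
  then show ?thesis
    unfolding ridge_obj_def by (simp add: dot_square_norm inner_commute)
qed

lemma ridge_obj_add_at_stationary:
  assumes normal: "ridge_matrix X lam *v t = transpose X *v Y + (y - x \<bullet> t) *\<^sub>R x"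
  shows "ridge_obj X Y x y lam (t + d)
           = ridge_obj X Y x y lam t + (norm (X *v d))\<^sup>2 + (x \<bullet> d)\<^sup>2 + lam * (norm d)\<^sup>2"
proof -
  define R where "R = Y - X *v t"
  define s where "s = y - x \<bullet> t"
  have "d \<bullet> (ridge_matrix X lam *v t) = d \<bullet> (transpose X *v Y) + s * (x \<bullet> d)"
    using normal by (simp add: s_def inner_add_right inner_commute del: transpose_matrix_vector)
  then have cross: "R \<bullet> (X *v d) + s * (x \<bullet> d) = lam * (t \<bullet> d)"
    by (simp add: R_def inner_ridge_matrix inner_transpose_matrix_vector inner_diff_right
        inner_commute del: transpose_matrix_vector)
  have "Y - X *v (t + d) = R - X *v d"
    by (simp add: R_def matrix_vector_right_distrib)
  then have "(norm (Y - X *v (t + d)))\<^sup>2 = (norm R)\<^sup>2 - 2 * (R \<bullet> (X *v d)) + (norm (X *v d))\<^sup>2"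
    by (simp add: power2_norm_eq_inner inner_diff_left inner_diff_right inner_commute)
  moreover have "(y - x \<bullet> (t + d))\<^sup>2 = s\<^sup>2 - 2 * s * (x \<bullet> d) + (x \<bullet> d)\<^sup>2"
    by (simp add: s_def inner_add_right power2_eq_square algebra_simps)
  moreover have "(norm (t + d))\<^sup>2 = (norm t)\<^sup>2 + 2 * (t \<bullet> d) + (norm d)\<^sup>2"
    by (simp add: power2_norm_eq_inner inner_add_left inner_add_right inner_commute)
  ultimately show ?thesis
    using cross by (simp add: ridge_obj_eq R_def[symmetric] s_def[symmetric] algebra_simps)
qed

lemma arg_min_eq_strict_global_min:
  fixes f :: "'a \<Rightarrow> 'b::linorder"
  assumes "\<And>z. z \<noteq> t \<Longrightarrow> f t < f z"
  shows "arg_min f (\<lambda>_. True) = t"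
  unfolding arg_min_def
proof (rule some_equality)
  show "is_arg_min f (\<lambda>_. True) t"
    using assms unfolding is_arg_min_def by (metis less_asym)
  show "z = t" if "is_arg_min f (\<lambda>_. True) z" for z
    using assms that unfolding is_arg_min_def by blast
qed

lemma theta_y_eq:
  fixes X :: "real ^ 'm ^ 'n" and Y :: "real ^ 'n"
  assumes "lam > 0"
  defines "P \<equiv> matrix_inv (ridge_matrix X lam)"
  defines "th \<equiv> P *v (transpose X *v Y)"
  shows "theta_y X Y x y lam = th + ((y - x \<bullet> th) / (1 + x \<bullet> (P *v x))) *\<^sub>R (P *v x)"
proof -
  define K where "K = 1 + x \<bullet> (P *v x)"
  define t where "t = th + ((y - x \<bullet> th) / K) *\<^sub>R (P *v x)"
  have inv: "invertible (ridge_matrix X lam)"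
    using assms(1) by (rule invertible_ridge_matrix)
  have "K > 0"
    using inner_matrix_inv_ridge_matrix_nonneg[OF assms(1), of x X] unfolding K_def P_def by simp
  then have "y - x \<bullet> t = (y - x \<bullet> th) / K"
    unfolding t_def K_def by (simp add: inner_add_right field_simps)
  then have normal: "ridge_matrix X lam *v t = transpose X *v Y + (y - x \<bullet> t) *\<^sub>R x"
    unfolding t_def th_def P_def
    by (simp add: matrix_vector_right_distrib matrix_vector_mult_scaleR
        matrix_vector_mul_matrix_inv[OF inv] del: transpose_matrix_vector)
  have "ridge_obj X Y x y lam t < ridge_obj X Y x y lam z" if "z \<noteq> t" for z
  proof -
    have "lam * (norm (z - t))\<^sup>2 > 0"
      using assms(1) that by simp
    moreover have "ridge_obj X Y x y lam z = ridge_obj X Y x y lam (t + (z - t))"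
      by simp
    ultimately show ?thesis
      using ridge_obj_add_at_stationary[OF normal, of "z - t"] by (smt (verit) zero_le_power2)
  qed
  then show ?thesis
    unfolding theta_y_def t_def K_def by (rule arg_min_eq_strict_global_min)
qed

lemma complete_square:
  fixes lam q t a N :: real
  assumes "D = 1 + lam * q" and "D \<noteq> 0"
  shows "t\<^sup>2 + lam * (N + 2 * t * a + t\<^sup>2 * q) = lam * N - (lam * a)\<^sup>2 / D + D * (t + lam * a / D)\<^sup>2"
proof -
  have "D * (t + lam * a / D)\<^sup>2 = D * t\<^sup>2 + 2 * lam * a * t + (lam * a)\<^sup>2 / D"
    using assms(2) by (simp add: field_simps power2_eq_square)
  then show ?thesis
    using assms(1) by (simp add: algebra_simps)
qed

lemma theta_y_loss:
  fixes X :: "real ^ 'm ^ 'n" and Y :: "real ^ 'n" and x :: "real ^ 'm"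
  assumes "lam > 0"
  defines "P \<equiv> matrix_inv (ridge_matrix X lam)"
  defines "th \<equiv> P *v (transpose X *v Y)"
  defines "K \<equiv> 1 + x \<bullet> (P *v x)"
  defines "D \<equiv> 1 + lam * ((P *v x) \<bullet> (P *v x))"
  shows "(y - theta_y X Y x y lam \<bullet> x)\<^sup>2 + lam * (norm (theta_y X Y x y lam))\<^sup>2
           = lam * (norm th)\<^sup>2 - (lam * (th \<bullet> (P *v x)))\<^sup>2 / D
             + (y - th \<bullet> x + lam * K * (th \<bullet> (P *v x)) / D)\<^sup>2 / (K\<^sup>2 / D)"
proof -
  define t where "t = (y - x \<bullet> th) / K"
  define a where "a = th \<bullet> (P *v x)"
  have "K > 0"
    using inner_matrix_inv_ridge_matrix_nonneg[OF assms(1), of x X] unfolding K_def P_def by simp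
  have "D > 0"
    unfolding D_def using assms(1) by (simp add: add_pos_nonneg)
  have ty: "theta_y X Y x y lam = th + t *\<^sub>R (P *v x)"
    unfolding t_def K_def th_def P_def using assms(1) by (rule theta_y_eq)
  have "x \<bullet> theta_y X Y x y lam = x \<bullet> th + t * (x \<bullet> (P *v x))"
    unfolding ty by (simp add: inner_add_right)
  then have "y - theta_y X Y x y lam \<bullet> x = t"
    using \<open>K > 0\<close> unfolding t_def K_def by (simp add: inner_commute field_simps)
  moreover have "(norm (theta_y X Y x y lam))\<^sup>2
      = (norm th)\<^sup>2 + 2 * t * a + t\<^sup>2 * ((P *v x) \<bullet> (P *v x))"
    unfolding ty a_def power2_norm_eq_inner
    by (simp add: inner_add_left inner_add_right inner_commute power2_eq_square algebra_simps)
  moreover have "(y - th \<bullet> x + lam * K * a / D)\<^sup>2 / (K\<^sup>2 / D) = D * (t + lam * a / D)\<^sup>2"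
    using \<open>K > 0\<close> \<open>D > 0\<close> unfolding t_def
    by (simp add: inner_commute field_simps power2_eq_square)
  ultimately show ?thesis
    using complete_square[OF meta_eq_to_obj_eq[OF D_def]] \<open>D > 0\<close> by (simp add: a_def)
qed

lemma gauss_dens_mult_luck:
  "gauss_dens \<sigma> \<theta> y x * luck lam \<sigma> \<theta>
     = exp (- ((y - \<theta> \<bullet> x)\<^sup>2 + lam * (norm \<theta>)\<^sup>2) / (2 * \<sigma>\<^sup>2)) / sqrt (2 * pi * \<sigma>\<^sup>2)"
  unfolding gauss_dens_def luck_def by (simp add: mult_exp_exp diff_divide_distrib)

theorem lemma1:
  fixes X :: "real ^ 'm ^ 'n" and Y :: "real ^ 'n" and x :: "real ^ 'm"
    and lam \<sigma> y :: real
  assumes "lam > 0" and "\<sigma> > 0"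
  shows
    "let P = matrix_inv (transpose X ** X + lam *\<^sub>R mat 1);
         K = 1 + x \<bullet> (P *v x);
         th = P *v (transpose X *v Y);
         D = 1 + lam * (x \<bullet> ((P ** P) *v x));
         mu = lam * K * (th \<bullet> (P *v x)) / D;
         s2 = \<sigma>\<^sup>2 * K\<^sup>2 / D;
         c = exp (1 / (2 * \<sigma>\<^sup>2) * ((lam * (th \<bullet> (P *v x)))\<^sup>2 / D - lam * (norm th)\<^sup>2));
         ty = theta_y X Y x y lam
     in gauss_dens \<sigma> ty y x * luck lam \<sigma> ty
        = c / sqrt (2 * pi * \<sigma>\<^sup>2) * exp (- (1 / (2 * s2)) * (y - th \<bullet> x + mu)\<^sup>2)"
proof -
  define P where "P = matrix_inv (ridge_matrix X lam)"
  define th where "th = P *v (transpose X *v Y)"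
  define K where "K = 1 + x \<bullet> (P *v x)"
  define D where "D = 1 + lam * ((P *v x) \<bullet> (P *v x))"
  define mu where "mu = lam * K * (th \<bullet> (P *v x)) / D"
  define ty where "ty = theta_y X Y x y lam"
  have PP: "x \<bullet> ((P ** P) *v x) = (P *v x) \<bullet> (P *v x)"
    unfolding P_def using invertible_ridge_matrix[OF assms(1)] ridge_matrix_self_adjoint
    by (metis matrix_vector_mul_assoc matrix_inv_self_adjoint)
  have loss: "(y - ty \<bullet> x)\<^sup>2 + lam * (norm ty)\<^sup>2
      = lam * (norm th)\<^sup>2 - (lam * (th \<bullet> (P *v x)))\<^sup>2 / D + (y - th \<bullet> x + mu)\<^sup>2 / (K\<^sup>2 / D)"
    unfolding ty_def th_def K_def D_def mu_def P_def by (rule theta_y_loss[OF assms(1)])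
  have exponent: "- (u - C + B / (K\<^sup>2 / D)) / (2 * \<sigma>\<^sup>2)
      = 1 / (2 * \<sigma>\<^sup>2) * (C - u) + - (1 / (2 * (\<sigma>\<^sup>2 * K\<^sup>2 / D))) * B" for u C B :: real
  proof -
    have "B / (K\<^sup>2 / D) / (2 * \<sigma>\<^sup>2) = 1 / (2 * (\<sigma>\<^sup>2 * K\<^sup>2 / D)) * B"
      by (simp add: field_simps)
    then show ?thesis
      by (simp add: add_divide_distrib diff_divide_distrib)
  qed
  show ?thesis
    unfolding Let_def ridge_matrix_def[symmetric] P_def[symmetric] th_def[symmetric] PP
      K_def[symmetric] D_def[symmetric] mu_def[symmetric] ty_def[symmetric]
      gauss_dens_mult_luck loss exponent exp_add
    by simp
qed

end
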